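(* Let $\mathbf{u}\in\mathbb{R}^d$ with $\|\mathbf{u}\|_2=1$ and $\alpha\in\mathbb{C}$ with $\Re(\alpha)<0$. Define the generalized function $\rho_{\mathbf{u},\alpha}$ by $\langle\rho_{\mathbf{u},\alpha},\varphi\rangle=\int_0^{+\infty}\mathrm{e}^{\alpha t}\varphi(t\mathbf{u})\,\mathrm{d}t$ and the operator $I_{\mathbf{u},\alpha}\varphi=\rho_{\mathbf{u},\alpha}*\varphi$ for $\varphi\in\mathcal{S}(\mathbb{R}^d)$. Then $I_{\mathbf{u},\alpha}$ is linear, shift-invariant and continuous from $\mathcal{S}$ to $\mathcal{S}$, and it is the inverse of $\mathrm{D}_{\mathbf{u}}-\alpha\mathrm{Id}$ on $\mathcal{S}$: for all $\varphi\in\mathcal{S}$, $I_{\mathbf{u},\alpha}(\mathrm{D}_{\mathbf{u}}-\alpha\mathrm{Id})\varphi=(\mathrm{D}_{\mathbf{u}}-\alpha\mathrm{Id})I_{\mathbf{u},\alpha}\varphi=\varphi$.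
   Context: $\mathcal{S}(\mathbb{R}^d)$ here denotes the (complex-valued) Schwartz space. $\mathrm{D}_{\mathbf{u}}\varphi=\langle\nabla\varphi,\mathbf{u}\rangle=u_1\partial_1\varphi+\dots+u_d\partial_d\varphi$ is the directional derivative. *)

theory Defs
  imports "HOL-Analysis.Analysis"
begin

text \<open>R^d is modelled by an arbitrary euclidean space 'a; functions are complex-valued.\<close>

definition dir_deriv :: "'a::euclidean_space \<Rightarrow> ('a \<Rightarrow> complex) \<Rightarrow> 'a \<Rightarrow> complex" where
  "dir_deriv u f = (\<lambda>x. frechet_derivative f (at x) u)"

fun iter_deriv :: "'a::euclidean_space list \<Rightarrow> ('a \<Rightarrow> complex) \<Rightarrow> 'a \<Rightarrow> complex" where
  "iter_deriv [] f = f"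
| "iter_deriv (v # vs) f = dir_deriv v (iter_deriv vs f)"

definition schwartz :: "('a::euclidean_space \<Rightarrow> complex) set" where
  "schwartz = {f. \<forall>vs. set vs \<subseteq> Basis \<longrightarrow>
      (\<forall>x. iter_deriv vs f differentiable (at x)) \<and>
      (\<forall>N::nat. bounded (range (\<lambda>x. (1 + norm x) ^ N * cmod (iter_deriv vs f x))))}"

definition schwartz_seminorm :: "nat \<Rightarrow> 'a::euclidean_space list \<Rightarrow> ('a \<Rightarrow> complex) \<Rightarrow> real" where
  "schwartz_seminorm N vs f = (SUP x. (1 + norm x) ^ N * cmod (iter_deriv vs f x))"

text \<open>Continuity of a linear operator S -> S w.r.t. the Frechet topology of S:
  every seminorm of the image is bounded by a finite combination of seminorms.\<close>
definition schwartz_continuous :: "(('a::euclidean_space \<Rightarrow> complex) \<Rightarrow> ('a \<Rightarrow> complex)) \<Rightarrow> bool" where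
  "schwartz_continuous T \<longleftrightarrow>
    (\<forall>N vs. set vs \<subseteq> Basis \<longrightarrow>
      (\<exists>M k C. \<forall>f\<in>schwartz.
         schwartz_seminorm N vs (T f) \<le>
           C * (\<Sum>(N', ws)\<in>{..M} \<times> {ws. set ws \<subseteq> Basis \<and> length ws \<le> k}.
                  schwartz_seminorm N' ws f)))"

definition rho :: "'a::euclidean_space \<Rightarrow> complex \<Rightarrow> ('a \<Rightarrow> complex) \<Rightarrow> complex" where
  "rho u \<alpha> \<phi> = (LINT t:{0..}|lborel. exp (\<alpha> * complex_of_real t) * \<phi> (t *\<^sub>R u))"

definition gconv :: "(('a::euclidean_space \<Rightarrow> complex) \<Rightarrow> complex) \<Rightarrow> ('a \<Rightarrow> complex) \<Rightarrow> 'a \<Rightarrow> complex" where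
  "gconv T \<phi> = (\<lambda>x. T (\<lambda>y. \<phi> (x - y)))"

definition I_op :: "'a::euclidean_space \<Rightarrow> complex \<Rightarrow> ('a \<Rightarrow> complex) \<Rightarrow> 'a \<Rightarrow> complex" where
  "I_op u \<alpha> \<phi> = gconv (rho u \<alpha>) \<phi>"

end

theory Submission
  imports Defs
begin

text \<open>
  Since \<open>Re \<alpha> < 0\<close>, the kernel
  is integrable against every weight \<open>(1 + t)\<^sup>N\<close>, and \<open>1 + |x| \<le> (1 + |x - t u|) (1 + t)\<close>
  transfers the polynomial decay of \<open>\<phi>\<close> to \<open>I \<phi>\<close>. A uniform second-order Taylor bound
  under the integral shows that \<open>I\<close> commutes with every directional derivative, so each
  Schwartz seminorm of \<open>I \<phi>\<close> is bounded by a constant times the same seminorm of \<open>\<phi>\<close>.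
  Finally \<open>t \<mapsto> -e\<^sup>\<alpha>\<^sup>t \<phi> (x - t u)\<close> is a primitive of \<open>e\<^sup>\<alpha>\<^sup>t ((D\<^sub>u - \<alpha>) \<phi>) (x - t u)\<close> that vanishes
  at infinity, which gives \<open>I (D\<^sub>u - \<alpha>) \<phi> = \<phi>\<close>; commuting \<open>D\<^sub>u\<close> past \<open>I\<close> gives the other identity.
\<close>

section \<open>Integrals over the half-line\<close>

lemma set_integrable_exp_halfline:
  fixes c :: real
  assumes "c < 0"
  shows "set_integrable lborel {0..} (\<lambda>t. exp (c * t))"
proof -
  have "(\<lambda>t. exp (- (- c) * t)) integrable_on {0::real..}"
    using assms by (intro integrable_on_exp_minus_to_infinity) simp
  then have "(\<lambda>t. exp (c * t)) absolutely_integrable_on {0::real..}"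
    by (intro nonnegative_absolutely_integrable_1) auto
  then have "integrable lebesgue (\<lambda>t. indicator {0::real..} t *\<^sub>R exp (c * t))"
    by (simp add: set_integrable_def)
  moreover have "(\<lambda>t. indicator {0::real..} t *\<^sub>R exp (c * t)) \<in> borel_measurable lborel"
    by measurable
  ultimately show ?thesis
    unfolding set_integrable_def using integrable_completion by blast
qed

lemma one_plus_power_le_exp:
  fixes e t :: real
  assumes "0 < e" "e \<le> 1" "0 \<le> t"
  shows "(1 + t) ^ N \<le> exp (e * real N * t) / e ^ N"
proof -
  have "e * (1 + t) \<le> 1 + e * t" using assms by (simp add: algebra_simps)
  also have "\<dots> \<le> exp (e * t)" by (rule exp_ge_add_one_self)
  finally have "1 + t \<le> exp (e * t) / e" using assms by (simp add: field_simps)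
  then have "(1 + t) ^ N \<le> (exp (e * t) / e) ^ N"
    using assms by (intro power_mono) auto
  also have "\<dots> = exp (e * real N * t) / e ^ N"
    by (simp add: power_divide exp_of_nat_mult[symmetric] mult_ac)
  finally show ?thesis .
qed

lemma set_integrable_poly_exp_halfline:
  fixes c :: real
  assumes "c < 0"
  shows "set_integrable lborel {0..} (\<lambda>t. (1 + t) ^ N * exp (c * t))"
proof (rule set_integrable_bound)
  \<comment> \<open>\<open>(1 + t)\<^sup>N \<le> exp (e N t) / e\<^sup>N\<close> with \<open>e N \<le> -c/2\<close>: half the decay absorbs the polynomial\<close>
  define e where "e = min 1 (- c / (2 * (real N + 1)))"
  have e: "0 < e" "e \<le> 1" using assms by (auto simp: e_def field_simps)
  have "e * real N \<le> (- c / (2 * (real N + 1))) * real N"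
    by (intro mult_right_mono) (auto simp: e_def)
  also have "\<dots> \<le> - c / 2" using assms by (simp add: field_simps)
  finally have eN: "e * real N + c \<le> c / 2" by simp
  show "set_integrable lborel {0..} (\<lambda>t. exp (c / 2 * t) / e ^ N)"
    using set_integrable_exp_halfline[of "c / 2"] assms by simp
  show "set_borel_measurable lborel {0..} (\<lambda>t::real. (1 + t) ^ N * exp (c * t))"
    unfolding set_borel_measurable_def by measurable
  have "(1 + t) ^ N * exp (c * t) \<le> exp (c / 2 * t) / e ^ N" if "0 \<le> t" for t
  proof -
    have "(1 + t) ^ N * exp (c * t) \<le> exp (e * real N * t) / e ^ N * exp (c * t)"
      using one_plus_power_le_exp[OF e that] by (intro mult_right_mono) auto
    also have "\<dots> = exp ((e * real N + c) * t) / e ^ N"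
      by (simp add: distrib_right exp_add)
    also have "\<dots> \<le> exp (c / 2 * t) / e ^ N"
      using e mult_right_mono[OF eN that] by (intro divide_right_mono) auto
    finally show ?thesis .
  qed
  then show "AE t in lborel. t \<in> {0..} \<longrightarrow>
      norm ((1 + t) ^ N * exp (c * t)) \<le> norm (exp (c / 2 * t) / e ^ N)"
    using e by (intro AE_I2) auto
qed

lemma set_integral_halfline_FTC:
  fixes f F :: "real \<Rightarrow> 'a::euclidean_space"
  assumes F: "\<And>t. (F has_vector_derivative f t) (at t)"
    and f_cont: "continuous_on UNIV f" and f_int: "set_integrable lborel {0..} f"
    and F_infinity: "(F \<longlongrightarrow> 0) at_top"
  shows "(LINT t:{0..}|lborel. f t) = - F 0"
proof -
  have f_meas: "set_borel_measurable lborel S f" if "S \<in> sets borel" for S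
    unfolding set_borel_measurable_def measurable_lborel2
    using that f_cont by (blast intro: borel_measurable_continuous_on_indicator continuous_on_subset)
  have "(F \<longlongrightarrow> F 0) (at 0)"
    using has_vector_derivative_continuous[OF F] by (simp add: isCont_def)
  then have F_0: "(F \<longlongrightarrow> F 0) (at_right 0)"
    by (rule tendsto_within_subset) simp
  have "(LINT t:{0..}|lborel. f t) = (LINT t:{0<..}|lborel. f t)"
    using AE_lborel_singleton[of "0::real"]
    by (intro set_integral_cong_set f_meas) (auto elim!: eventually_mono)
  also have "\<dots> = (LBINT t=ereal 0..\<infinity>. f t)"
    by (rule interval_integral_to_infinity_eq[symmetric])
  also have "\<dots> = 0 - F 0"
  proof (rule interval_integral_FTC_integrable[where F=F])
    show "isCont f t" for t
      using f_cont by (simp add: continuous_on_eq_continuous_at)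
    show "set_integrable lborel (einterval (ereal 0) \<infinity>) f"
      by (rule set_integrable_subset[OF f_int]) auto
    show "((F \<circ> real_of_ereal) \<longlongrightarrow> F 0) (at_right (ereal 0))"
      using F_0 by (simp add: ereal_tendsto_simps1)
    show "((F \<circ> real_of_ereal) \<longlongrightarrow> 0) (at_left \<infinity>)"
      using F_infinity by (simp add: ereal_tendsto_simps1)
  qed (use F in auto)
  finally show ?thesis by simp
qed

lemma tendsto_exp_mult_bounded_at_top:
  fixes g :: "real \<Rightarrow> complex"
  assumes "Re \<alpha> < 0" "\<And>t. norm (g t) \<le> B"
  shows "((\<lambda>t. exp (\<alpha> * complex_of_real t) * g t) \<longlongrightarrow> 0) at_top"
proof (rule Lim_null_comparison)
  show "\<forall>\<^sub>F t in at_top. norm (exp (\<alpha> * complex_of_real t) * g t) \<le> B * exp (Re \<alpha> * t)"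
    using assms(2) by (intro always_eventually allI) (simp add: norm_mult mult.commute)
  have "LIM t at_top. Re \<alpha> * t :> at_bot"
    by (rule filterlim_tendsto_neg_mult_at_bot[OF tendsto_const assms(1) filterlim_ident])
  then show "((\<lambda>t. B * exp (Re \<alpha> * t)) \<longlongrightarrow> 0) at_top"
    by (intro tendsto_mult_right_zero filterlim_compose[OF exp_at_bot])
qed

section \<open>Directional derivatives\<close>

lemma continuous_on_UNIV_differentiable:
  "(\<And>x. f differentiable (at x)) \<Longrightarrow> continuous_on UNIV f"
  by (simp add: differentiable_imp_continuous_on differentiable_on_def)

lemma dir_deriv_eq_sum_Basis:
  fixes \<psi> :: "'a::euclidean_space \<Rightarrow> complex"
  assumes "\<psi> differentiable (at y)"
  shows "dir_deriv h \<psi> y = (\<Sum>i\<in>Basis. (h \<bullet> i) *\<^sub>R dir_deriv i \<psi> y)"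
proof -
  have lin: "linear (frechet_derivative \<psi> (at y))"
    using assms frechet_derivative_works has_derivative_linear by blast
  have "dir_deriv h \<psi> y = frechet_derivative \<psi> (at y) (\<Sum>i\<in>Basis. (h \<bullet> i) *\<^sub>R i)"
    by (simp add: dir_deriv_def euclidean_representation)
  also have "\<dots> = (\<Sum>i\<in>Basis. (h \<bullet> i) *\<^sub>R dir_deriv i \<psi> y)"
    by (simp add: linear_sum[OF lin] linear_scale[OF lin] dir_deriv_def)
  finally show ?thesis .
qed

lemma norm_sum_Basis_scaleR_le:
  fixes c :: "'a::euclidean_space \<Rightarrow> 'b::real_normed_vector"
  assumes "\<And>i. i \<in> Basis \<Longrightarrow> norm (c i) \<le> B"
  shows "norm (\<Sum>i\<in>Basis. (h \<bullet> i) *\<^sub>R c i) \<le> real DIM('a) * B * norm h"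
proof -
  have "norm (\<Sum>i\<in>Basis. (h \<bullet> i) *\<^sub>R c i) \<le> (\<Sum>i\<in>(Basis::'a set). norm h * B)"
    using assms Basis_le_norm norm_ge_zero
    by (intro order_trans[OF norm_sum] sum_mono) (auto intro!: mult_mono)
  then show ?thesis by (simp add: mult_ac)
qed

lemma uniform_bound_finite:
  fixes f :: "'i \<Rightarrow> 'b \<Rightarrow> 'c::real_normed_vector"
  assumes "finite A" "\<And>i. i \<in> A \<Longrightarrow> bounded (range (f i))"
  obtains B where "\<And>i y. i \<in> A \<Longrightarrow> norm (f i y) \<le> B"
proof -
  have "bounded (\<Union>i\<in>A. range (f i))"
    using assms by (intro bounded_UN) auto
  then obtain B where "\<forall>z\<in>(\<Union>i\<in>A. range (f i)). norm z \<le> B"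
    by (auto simp: bounded_iff)
  then show ?thesis using that by blast
qed

lemma lipschitz_of_bounded_dir_derivs:
  fixes g :: "'a::euclidean_space \<Rightarrow> complex"
  assumes "\<And>x. g differentiable (at x)"
    and "\<And>i y. i \<in> Basis \<Longrightarrow> norm (dir_deriv i g y) \<le> B"
  shows "norm (g x - g y) \<le> real DIM('a) * B * norm (x - y)"
proof (rule differentiable_bound[where S=UNIV and f'="\<lambda>z. frechet_derivative g (at z)"])
  show "(g has_derivative frechet_derivative g (at z)) (at z within UNIV)" for z
    using assms(1) frechet_derivative_works by auto
  show "onorm (frechet_derivative g (at z)) \<le> real DIM('a) * B" for z
  proof (rule onorm_le)
    fix h
    have "frechet_derivative g (at z) h = (\<Sum>i\<in>Basis. (h \<bullet> i) *\<^sub>R dir_deriv i g z)"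
      using dir_deriv_eq_sum_Basis[OF assms(1), where y=z and h=h] by (simp add: dir_deriv_def)
    also have "norm \<dots> \<le> real DIM('a) * B * norm h"
      by (rule norm_sum_Basis_scaleR_le) (rule assms(2))
    finally show "norm (frechet_derivative g (at z) h) \<le> real DIM('a) * B * norm h" .
  qed
qed auto

lemma first_order_remainder_le:
  fixes \<psi> :: "'a::euclidean_space \<Rightarrow> complex"
  assumes d: "\<And>x. \<psi> differentiable (at x)"
    and L: "\<And>i y z. i \<in> Basis \<Longrightarrow> norm (dir_deriv i \<psi> y - dir_deriv i \<psi> z) \<le> L * norm (y - z)"
  shows "norm (\<psi> (y + h) - \<psi> y - dir_deriv h \<psi> y) \<le> real DIM('a) * L * norm h ^ 2"
proof -
  obtain i0 :: 'a where "i0 \<in> Basis" using nonempty_Basis by blast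
  then have "norm (dir_deriv i0 \<psi> i0 - dir_deriv i0 \<psi> 0) \<le> L" using L[of i0 i0 0] by simp
  then have "0 \<le> L" by (rule order_trans[OF norm_ge_zero])
  have "norm (\<psi> (y + h) - \<psi> y - frechet_derivative \<psi> (at y) (y + h - y))
      \<le> norm (y + h - y) * (real DIM('a) * L * norm h)"
  proof (rule differentiable_bound_linearization[where S="cball y (norm h)"])
    show "y + t *\<^sub>R (y + h - y) \<in> cball y (norm h)" if "t \<in> {0..1}" for t
      using that mult_right_mono[of t 1 "norm h"] by (auto simp: dist_norm)
    show "(\<psi> has_derivative frechet_derivative \<psi> (at x)) (at x within cball y (norm h))" for x
      using d frechet_derivative_works has_derivative_at_withinI by blast
    show "onorm (frechet_derivative \<psi> (at x) - frechet_derivative \<psi> (at y))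
        \<le> real DIM('a) * L * norm h" if "x \<in> cball y (norm h)" for x
    proof (rule onorm_le)
      fix k
      have "norm (x - y) \<le> norm h"
        using \<open>x \<in> cball y (norm h)\<close> by (simp add: dist_norm norm_minus_commute)
      then have "norm (dir_deriv i \<psi> x - dir_deriv i \<psi> y) \<le> L * norm h" if "i \<in> Basis" for i
        using L[OF that, of x y] \<open>0 \<le> L\<close> by (meson mult_left_mono order_trans)
      then have "norm (\<Sum>i\<in>Basis. (k \<bullet> i) *\<^sub>R (dir_deriv i \<psi> x - dir_deriv i \<psi> y))
          \<le> real DIM('a) * (L * norm h) * norm k"
        by (rule norm_sum_Basis_scaleR_le)
      then show "norm ((frechet_derivative \<psi> (at x) - frechet_derivative \<psi> (at y)) k)
          \<le> real DIM('a) * L * norm h * norm k"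
        using dir_deriv_eq_sum_Basis[OF d, where y=x and h=k] dir_deriv_eq_sum_Basis[OF d, where y=y and h=k]
        by (simp add: dir_deriv_def sum_subtractf scaleR_diff_right mult_ac)
    qed
  qed auto
  then show ?thesis by (simp add: dir_deriv_def power2_eq_square mult_ac)
qed

lemma has_derivative_at_of_quadratic_remainder:
  fixes f :: "'a::real_normed_vector \<Rightarrow> 'b::real_normed_vector"
  assumes "bounded_linear f'"
    and "\<And>h. norm (f (x + h) - f x - f' h) \<le> K * norm h ^ 2"
  shows "(f has_derivative f') (at x)"
  unfolding has_derivative_at_alt
proof (intro conjI allI impI assms(1))
  fix e :: real assume "0 < e"
  show "\<exists>d>0. \<forall>y. norm (y - x) < d \<longrightarrow> norm (f y - f x - f' (y - x)) \<le> e * norm (y - x)"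
  proof (intro exI conjI allI impI)
    show "0 < e / (\<bar>K\<bar> + 1)" using \<open>0 < e\<close> by simp
    fix y assume y: "norm (y - x) < e / (\<bar>K\<bar> + 1)"
    have "K * norm (y - x) \<le> (\<bar>K\<bar> + 1) * norm (y - x)"
      by (intro mult_right_mono) auto
    also have "\<dots> \<le> e"
      using y pos_less_divide_eq[of "\<bar>K\<bar> + 1"] by (simp add: mult.commute)
    finally have "K * norm (y - x) \<le> e" .
    then have "K * norm (y - x) ^ 2 \<le> e * norm (y - x)"
      by (simp add: power2_eq_square mult_right_mono flip: mult.assoc)
    then show "norm (f y - f x - f' (y - x)) \<le> e * norm (y - x)"
      using assms(2)[of "y - x"] by simp
  qed
qed

lemma has_vector_derivative_along_line:
  fixes \<phi> :: "'a::euclidean_space \<Rightarrow> complex"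
  assumes "\<phi> differentiable (at (x - t *\<^sub>R u))"
  shows "((\<lambda>s. \<phi> (x - s *\<^sub>R u)) has_vector_derivative - dir_deriv u \<phi> (x - t *\<^sub>R u)) (at t)"
proof -
  have lin: "linear (frechet_derivative \<phi> (at (x - t *\<^sub>R u)))"
    using assms frechet_derivative_works has_derivative_linear by blast
  have "((\<lambda>s. x - s *\<^sub>R u) has_derivative (\<lambda>s. - (s *\<^sub>R u))) (at t)"
    by (auto intro!: derivative_eq_intros)
  from diff_chain_at[OF this frechet_derivative_works[THEN iffD1, OF assms]]
  have "((\<phi> \<circ> (\<lambda>s. x - s *\<^sub>R u)) has_derivative
      (frechet_derivative \<phi> (at (x - t *\<^sub>R u)) \<circ> (\<lambda>s. - (s *\<^sub>R u)))) (at t)" .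
  moreover have "frechet_derivative \<phi> (at (x - t *\<^sub>R u)) \<circ> (\<lambda>s. - (s *\<^sub>R u))
      = (\<lambda>s. s *\<^sub>R - dir_deriv u \<phi> (x - t *\<^sub>R u))"
    by (rule ext) (simp add: linear_neg[OF lin] linear_scale[OF lin] dir_deriv_def)
  ultimately show ?thesis
    by (simp add: has_vector_derivative_def o_def)
qed

section \<open>Integral representation and bounds for the operator\<close>

definition exp_moment :: "complex \<Rightarrow> nat \<Rightarrow> real" where
  "exp_moment \<alpha> N = (LINT t:{0..}|lborel. (1 + t) ^ N * exp (Re \<alpha> * t))"

lemma exp_moment_nonneg: "0 \<le> exp_moment \<alpha> N"
  unfolding exp_moment_def set_lebesgue_integral_def
  by (rule Bochner_Integration.integral_nonneg) (auto simp: indicator_def)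

lemma I_op_integral:
  "I_op u \<alpha> \<psi> x = (LINT t:{0..}|lborel. exp (\<alpha> * complex_of_real t) * \<psi> (x - t *\<^sub>R u))"
  by (simp add: I_op_def gconv_def rho_def)

lemma I_op_translate: "I_op u \<alpha> (\<lambda>y. \<psi> (y - h)) x = I_op u \<alpha> \<psi> (x - h)"
  by (simp add: I_op_integral algebra_simps)

lemma set_integrable_I_op_integrand:
  fixes \<psi> :: "'a::euclidean_space \<Rightarrow> complex"
  assumes "Re \<alpha> < 0" "continuous_on UNIV \<psi>"
    and "\<And>t. 0 \<le> t \<Longrightarrow> norm (\<psi> (x - t *\<^sub>R u)) \<le> B * (1 + t) ^ N"
  shows "set_integrable lborel {0..} (\<lambda>t. exp (\<alpha> * complex_of_real t) * \<psi> (x - t *\<^sub>R u))"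
proof (rule set_integrable_bound)
  show "set_integrable lborel {0..} (\<lambda>t. B * ((1 + t) ^ N * exp (Re \<alpha> * t)))"
    by (intro set_integrable_mult_right set_integrable_poly_exp_halfline assms(1))
  have cont: "continuous_on UNIV (\<lambda>t. exp (\<alpha> * complex_of_real t) * \<psi> (x - t *\<^sub>R u))"
    by (intro continuous_intros continuous_on_compose2[OF assms(2)]) auto
  show "set_borel_measurable lborel {0..} (\<lambda>t. exp (\<alpha> * complex_of_real t) * \<psi> (x - t *\<^sub>R u))"
    unfolding set_borel_measurable_def using borel_measurable_continuous_onI[OF cont] by measurable
  have "norm (exp (\<alpha> * complex_of_real t) * \<psi> (x - t *\<^sub>R u))
      \<le> norm (B * ((1 + t) ^ N * exp (Re \<alpha> * t)))" if "0 \<le> t" for t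
  proof -
    have "norm (exp (\<alpha> * complex_of_real t) * \<psi> (x - t *\<^sub>R u)) = exp (Re \<alpha> * t) * norm (\<psi> (x - t *\<^sub>R u))"
      by (simp add: norm_mult)
    also have "\<dots> \<le> exp (Re \<alpha> * t) * (B * (1 + t) ^ N)"
      using assms(3)[OF that] by (intro mult_left_mono) auto
    also have "\<dots> \<le> norm (B * ((1 + t) ^ N * exp (Re \<alpha> * t)))"
      using that by (simp add: abs_mult mult_ac mult_right_mono)
    finally show ?thesis .
  qed
  then show "AE t in lborel. t \<in> {0..} \<longrightarrow> norm (exp (\<alpha> * complex_of_real t) * \<psi> (x - t *\<^sub>R u))
      \<le> norm (B * ((1 + t) ^ N * exp (Re \<alpha> * t)))"
    by (intro AE_I2) auto
qed

lemma set_integrable_I_op_integrand_bcontfun: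
  fixes \<psi> :: "'a::euclidean_space \<Rightarrow> complex"
  assumes "Re \<alpha> < 0" "\<psi> \<in> bcontfun"
  shows "set_integrable lborel {0..} (\<lambda>t. exp (\<alpha> * complex_of_real t) * \<psi> (x - t *\<^sub>R u))"
proof -
  obtain B where "\<And>y. norm (\<psi> y) \<le> B"
    using assms(2) by (auto simp: bcontfun_def bounded_iff)
  then show ?thesis
    using assms by (intro set_integrable_I_op_integrand[where B=B and N=0]) (auto simp: bcontfun_def)
qed

lemma norm_I_op_le:
  fixes \<psi> :: "'a::euclidean_space \<Rightarrow> complex"
  assumes "Re \<alpha> < 0" "continuous_on UNIV \<psi>"
    and "\<And>t. 0 \<le> t \<Longrightarrow> norm (\<psi> (x - t *\<^sub>R u)) \<le> B * (1 + t) ^ N"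
  shows "norm (I_op u \<alpha> \<psi> x) \<le> B * exp_moment \<alpha> N"
proof -
  note integrable = set_integrable_I_op_integrand[OF assms]
  have "norm (I_op u \<alpha> \<psi> x) \<le> (LINT t:{0..}|lborel. norm (exp (\<alpha> * complex_of_real t) * \<psi> (x - t *\<^sub>R u)))"
    unfolding I_op_integral by (rule set_integral_norm_bound[OF integrable])
  also have "\<dots> \<le> (LINT t:{0..}|lborel. B * ((1 + t) ^ N * exp (Re \<alpha> * t)))"
  proof (rule set_integral_mono)
    show "set_integrable lborel {0..} (\<lambda>t. B * ((1 + t) ^ N * exp (Re \<alpha> * t)))"
      by (intro set_integrable_mult_right set_integrable_poly_exp_halfline assms(1))
    show "norm (exp (\<alpha> * complex_of_real t) * \<psi> (x - t *\<^sub>R u)) \<le> B * ((1 + t) ^ N * exp (Re \<alpha> * t))"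
      if "t \<in> {0..}" for t
      using assms(3)[of t] that by (simp add: norm_mult mult_left_mono mult_ac)
  qed (rule set_integrable_norm[OF integrable])
  also have "\<dots> = B * exp_moment \<alpha> N"
    by (simp add: exp_moment_def)
  finally show ?thesis .
qed

lemma one_plus_norm_le_mult:
  fixes x u :: "'a::real_normed_vector"
  assumes "norm u = 1" "0 \<le> t"
  shows "1 + norm x \<le> (1 + norm (x - t *\<^sub>R u)) * (1 + t)"
proof -
  have "norm x \<le> norm (x - t *\<^sub>R u) + t"
    using norm_triangle_ineq[of "x - t *\<^sub>R u" "t *\<^sub>R u"] assms by simp
  moreover have "0 \<le> t * norm (x - t *\<^sub>R u)"
    using assms(2) by simp
  ultimately show ?thesis by (simp add: algebra_simps)
qed

lemma I_op_weighted_bound: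
  fixes \<psi> :: "'a::euclidean_space \<Rightarrow> complex"
  assumes "norm u = 1" "Re \<alpha> < 0" "continuous_on UNIV \<psi>"
    and S: "\<And>y. (1 + norm y) ^ N * norm (\<psi> y) \<le> S"
  shows "(1 + norm x) ^ N * norm (I_op u \<alpha> \<psi> x) \<le> S * exp_moment \<alpha> N"
proof -
  have pos: "0 < (1 + norm x) ^ N" by (simp add: add_pos_nonneg)
  have "norm (\<psi> (x - t *\<^sub>R u)) \<le> S / (1 + norm x) ^ N * (1 + t) ^ N" if "0 \<le> t" for t
  proof -
    have "(1 + norm x) ^ N \<le> (1 + norm (x - t *\<^sub>R u)) ^ N * (1 + t) ^ N"
      unfolding power_mult_distrib[symmetric]
      by (intro power_mono one_plus_norm_le_mult assms(1) that) simp
    then have "(1 + norm x) ^ N * norm (\<psi> (x - t *\<^sub>R u))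
        \<le> ((1 + norm (x - t *\<^sub>R u)) ^ N * (1 + t) ^ N) * norm (\<psi> (x - t *\<^sub>R u))"
      by (rule mult_right_mono) simp
    also have "\<dots> = ((1 + norm (x - t *\<^sub>R u)) ^ N * norm (\<psi> (x - t *\<^sub>R u))) * (1 + t) ^ N"
      by (simp add: mult_ac)
    also have "\<dots> \<le> S * (1 + t) ^ N"
      using S that by (intro mult_right_mono) auto
    finally show ?thesis using pos by (simp add: field_simps)
  qed
  then have "norm (I_op u \<alpha> \<psi> x) \<le> S / (1 + norm x) ^ N * exp_moment \<alpha> N"
    by (rule norm_I_op_le[OF assms(2,3)])
  then show ?thesis using pos by (simp add: field_simps)
qed

lemma I_op_lincomb:
  fixes f g :: "'a::euclidean_space \<Rightarrow> complex"
  assumes "Re \<alpha> < 0" "f \<in> bcontfun" "g \<in> bcontfun"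
  shows "I_op u \<alpha> (\<lambda>y. a * f y + b * g y) x = a * I_op u \<alpha> f x + b * I_op u \<alpha> g x"
proof -
  note integrable = set_integrable_I_op_integrand_bcontfun[OF assms(1)]
  have "I_op u \<alpha> (\<lambda>y. a * f y + b * g y) x
      = (LINT t:{0..}|lborel. a * (exp (\<alpha> * complex_of_real t) * f (x - t *\<^sub>R u))
           + b * (exp (\<alpha> * complex_of_real t) * g (x - t *\<^sub>R u)))"
    by (simp add: I_op_integral algebra_simps)
  also have "\<dots> = a * I_op u \<alpha> f x + b * I_op u \<alpha> g x"
    using integrable[OF assms(2)] integrable[OF assms(3)] by (simp add: I_op_integral)
  finally show ?thesis .
qed

lemma I_op_diff:
  fixes f g :: "'a::euclidean_space \<Rightarrow> complex"
  assumes "Re \<alpha> < 0" "f \<in> bcontfun" "g \<in> bcontfun"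
  shows "I_op u \<alpha> (\<lambda>y. f y - g y) x = I_op u \<alpha> f x - I_op u \<alpha> g x"
  using I_op_lincomb[OF assms, where a=1 and b="-1"] by simp

lemma I_op_sum:
  fixes f :: "'i \<Rightarrow> 'a::euclidean_space \<Rightarrow> complex"
  assumes "Re \<alpha> < 0" "\<And>i. i \<in> A \<Longrightarrow> f i \<in> bcontfun"
  shows "I_op u \<alpha> (\<lambda>y. \<Sum>i\<in>A. c i *\<^sub>R f i y) x = (\<Sum>i\<in>A. c i *\<^sub>R I_op u \<alpha> (f i) x)"
proof -
  have "I_op u \<alpha> (\<lambda>y. \<Sum>i\<in>A. c i *\<^sub>R f i y) x
      = (LINT t:{0..}|lborel. \<Sum>i\<in>A. c i *\<^sub>R (exp (\<alpha> * complex_of_real t) * f i (x - t *\<^sub>R u)))"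
    by (simp add: I_op_integral sum_distrib_left)
  also have "\<dots> = (\<Sum>i\<in>A. LINT t:{0..}|lborel. c i *\<^sub>R (exp (\<alpha> * complex_of_real t) * f i (x - t *\<^sub>R u)))"
  proof -
    have integrable: "set_integrable lborel {0..} (\<lambda>t. c i *\<^sub>R (exp (\<alpha> * complex_of_real t) * f i (x - t *\<^sub>R u)))"
      if "i \<in> A" for i
      by (rule set_integrable_scaleR_right)
         (rule set_integrable_I_op_integrand_bcontfun[OF assms(1) assms(2)[OF that]])
    show ?thesis
      unfolding set_lebesgue_integral_def scaleR_sum_right
      by (rule Bochner_Integration.integral_sum) (use integrable in \<open>simp add: set_integrable_def\<close>)
  qed
  also have "\<dots> = (\<Sum>i\<in>A. c i *\<^sub>R I_op u \<alpha> (f i) x)"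
    by (simp add: I_op_integral)
  finally show ?thesis .
qed

section \<open>Differentiation under the integral\<close>

definition bounded_twice_differentiable :: "('a::euclidean_space \<Rightarrow> complex) \<Rightarrow> bool" where
  "bounded_twice_differentiable \<psi> \<longleftrightarrow>
     (\<forall>x. \<psi> differentiable (at x)) \<and> bounded (range \<psi>) \<and>
     (\<forall>i\<in>Basis. (\<forall>x. dir_deriv i \<psi> differentiable (at x)) \<and> bounded (range (dir_deriv i \<psi>)) \<and>
        (\<forall>j\<in>Basis. bounded (range (dir_deriv j (dir_deriv i \<psi>)))))"

lemma bounded_twice_differentiable_bcontfun:
  fixes \<psi> :: "'a::euclidean_space \<Rightarrow> complex"
  assumes "bounded_twice_differentiable \<psi>"
  shows "\<psi> \<in> bcontfun" and "dir_deriv v \<psi> \<in> bcontfun"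
proof -
  have d: "\<And>x. \<psi> differentiable (at x)"
    using assms by (simp add: bounded_twice_differentiable_def)
  show "\<psi> \<in> bcontfun"
    using assms continuous_on_UNIV_differentiable[OF d]
    by (simp add: bcontfun_def bounded_twice_differentiable_def)
  have "\<And>i. i \<in> Basis \<Longrightarrow> bounded (range (dir_deriv i \<psi>))"
    using assms by (simp add: bounded_twice_differentiable_def)
  then obtain B where B: "\<And>i y. i \<in> Basis \<Longrightarrow> norm (dir_deriv i \<psi> y) \<le> B"
    using uniform_bound_finite[where f="\<lambda>i. dir_deriv i \<psi>", OF finite_Basis] by blast
  have "dir_deriv v \<psi> = (\<lambda>y. \<Sum>i\<in>Basis. (v \<bullet> i) *\<^sub>R dir_deriv i \<psi> y)"
    by (rule ext, rule dir_deriv_eq_sum_Basis[OF d])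
  also have "\<dots> \<in> bcontfun"
  proof (rule bcontfun_normI)
    have "continuous_on UNIV (dir_deriv i \<psi>)" if "i \<in> Basis" for i
      using assms that unfolding bounded_twice_differentiable_def
      by (blast intro: continuous_on_UNIV_differentiable)
    then show "continuous_on UNIV (\<lambda>y. \<Sum>i\<in>Basis. (v \<bullet> i) *\<^sub>R dir_deriv i \<psi> y)"
      by (intro continuous_on_sum continuous_on_scaleR continuous_on_const)
    show "norm (\<Sum>i\<in>Basis. (v \<bullet> i) *\<^sub>R dir_deriv i \<psi> y) \<le> real DIM('a) * B * norm v" for y
      by (rule norm_sum_Basis_scaleR_le) (rule B)
  qed
  finally show "dir_deriv v \<psi> \<in> bcontfun" .
qed

lemma bcontfun_translate:
  fixes f :: "'a::real_normed_vector \<Rightarrow> 'b::metric_space"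
  assumes "f \<in> bcontfun"
  shows "(\<lambda>y. f (y + h)) \<in> bcontfun"
proof -
  have cont: "continuous_on UNIV f" and bdd: "bounded (range f)"
    using assms by (simp_all add: bcontfun_def)
  have "continuous_on UNIV (\<lambda>y. f (y + h))"
    by (intro continuous_on_compose2[OF cont] continuous_on_add continuous_on_id continuous_on_const) simp
  moreover have "range (\<lambda>y. f (y + h)) \<subseteq> range f"
    by (intro image_subsetI rangeI)
  then have "bounded (range (\<lambda>y. f (y + h)))"
    using bdd by (rule bounded_subset[rotated])
  ultimately show ?thesis by (simp add: bcontfun_def)
qed

lemma I_op_dir_deriv_eq_sum:
  fixes \<psi> :: "'a::euclidean_space \<Rightarrow> complex"
  assumes "Re \<alpha> < 0" "bounded_twice_differentiable \<psi>"
  shows "I_op u \<alpha> (dir_deriv h \<psi>) x = (\<Sum>i\<in>Basis. (h \<bullet> i) *\<^sub>R I_op u \<alpha> (dir_deriv i \<psi>) x)"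
proof -
  have "dir_deriv h \<psi> = (\<lambda>y. \<Sum>i\<in>Basis. (h \<bullet> i) *\<^sub>R dir_deriv i \<psi> y)"
    by (rule ext, rule dir_deriv_eq_sum_Basis) (use assms(2) in \<open>simp add: bounded_twice_differentiable_def\<close>)
  then show ?thesis
    using I_op_sum[OF assms(1) bounded_twice_differentiable_bcontfun(2)[OF assms(2)]] by simp
qed

lemma bounded_twice_differentiable_remainder_le:
  fixes \<psi> :: "'a::euclidean_space \<Rightarrow> complex"
  assumes \<psi>: "bounded_twice_differentiable \<psi>"
  shows "\<exists>C. \<forall>y h. norm (\<psi> (y + h) - \<psi> y - dir_deriv h \<psi> y) \<le> C * norm h ^ 2"
proof -
  have d: "\<And>y. \<psi> differentiable (at y)"
    using \<psi> by (simp add: bounded_twice_differentiable_def)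
  have bdd: "bounded (range (dir_deriv (snd p) (dir_deriv (fst p) \<psi>)))" if "p \<in> Basis \<times> Basis" for p
    using \<psi> that by (auto simp: bounded_twice_differentiable_def)
  obtain B where B: "\<And>p y. p \<in> Basis \<times> Basis \<Longrightarrow> norm (dir_deriv (snd p) (dir_deriv (fst p) \<psi>) y) \<le> B"
    using uniform_bound_finite[where f="\<lambda>p. dir_deriv (snd p) (dir_deriv (fst p) \<psi>)",
        OF finite_cartesian_product[OF finite_Basis finite_Basis] bdd] by blast
  have lip: "norm (dir_deriv i \<psi> y - dir_deriv i \<psi> z) \<le> real DIM('a) * B * norm (y - z)"
    if "i \<in> Basis" for i y z
  proof (rule lipschitz_of_bounded_dir_derivs)
    show "dir_deriv i \<psi> differentiable (at x)" for x
      using \<psi> that by (simp add: bounded_twice_differentiable_def)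
    show "norm (dir_deriv j (dir_deriv i \<psi>) y) \<le> B" if "j \<in> Basis" for j y
      using B[of "(i, j)" y] \<open>i \<in> Basis\<close> that by simp
  qed
  show ?thesis
    by (intro exI allI) (rule first_order_remainder_le[OF d lip])
qed

lemma I_op_remainder_le:
  fixes \<psi> :: "'a::euclidean_space \<Rightarrow> complex"
  assumes a: "Re \<alpha> < 0" and \<psi>: "bounded_twice_differentiable \<psi>"
  shows "\<exists>K. \<forall>h. norm (I_op u \<alpha> \<psi> (x + h) - I_op u \<alpha> \<psi> x - I_op u \<alpha> (dir_deriv h \<psi>) x) \<le> K * norm h ^ 2"
proof -
  from bounded_twice_differentiable_remainder_le[OF \<psi>] obtain C
    where C: "\<forall>y h. norm (\<psi> (y + h) - \<psi> y - dir_deriv h \<psi> y) \<le> C * norm h ^ 2" ..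
  define r where "r h y = \<psi> (y + h) - \<psi> y - dir_deriv h \<psi> y" for h y
  have \<psi>_bc: "\<psi> \<in> bcontfun"
    by (rule bounded_twice_differentiable_bcontfun(1)[OF \<psi>])
  have deriv_bc: "dir_deriv h \<psi> \<in> bcontfun" for h
    by (rule bounded_twice_differentiable_bcontfun(2)[OF \<psi>])
  have shift_bc: "(\<lambda>y. \<psi> (y + h)) \<in> bcontfun" for h
    by (rule bcontfun_translate[OF \<psi>_bc])
  have bound: "norm (I_op u \<alpha> \<psi> (x + h) - I_op u \<alpha> \<psi> x - I_op u \<alpha> (dir_deriv h \<psi>) x)
      \<le> C * exp_moment \<alpha> 0 * norm h ^ 2" for h
  proof -
    have "I_op u \<alpha> \<psi> (x + h) - I_op u \<alpha> \<psi> x - I_op u \<alpha> (dir_deriv h \<psi>) x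
        = I_op u \<alpha> (\<lambda>y. \<psi> (y + h)) x - I_op u \<alpha> \<psi> x - I_op u \<alpha> (dir_deriv h \<psi>) x"
      using I_op_translate[of u \<alpha> \<psi> "- h" x] by simp
    also have "\<dots> = I_op u \<alpha> (r h) x"
      unfolding r_def I_op_diff[OF a minus_cont[OF shift_bc \<psi>_bc] deriv_bc] I_op_diff[OF a shift_bc \<psi>_bc] ..
    also have "norm \<dots> \<le> (C * norm h ^ 2) * exp_moment \<alpha> 0"
    proof (rule norm_I_op_le[OF a])
      show "continuous_on UNIV (r h)"
        using minus_cont[OF minus_cont[OF shift_bc \<psi>_bc] deriv_bc] by (simp add: r_def bcontfun_def)
      show "norm (r h (x - t *\<^sub>R u)) \<le> C * norm h ^ 2 * (1 + t) ^ 0" for t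
        using C by (simp add: r_def)
    qed
    finally show ?thesis by (simp add: mult_ac)
  qed
  then show ?thesis by (intro exI allI) (rule bound)
qed

lemma has_derivative_I_op:
  fixes \<psi> :: "'a::euclidean_space \<Rightarrow> complex"
  assumes "Re \<alpha> < 0" "bounded_twice_differentiable \<psi>"
  shows "(I_op u \<alpha> \<psi> has_derivative (\<lambda>h. I_op u \<alpha> (dir_deriv h \<psi>) x)) (at x)"
proof -
  from I_op_remainder_le[OF assms, where u=u and x=x] obtain K where
    "\<forall>h. norm (I_op u \<alpha> \<psi> (x + h) - I_op u \<alpha> \<psi> x - I_op u \<alpha> (dir_deriv h \<psi>) x) \<le> K * norm h ^ 2" ..
  note K = this[rule_format]
  have eq: "(\<lambda>h. I_op u \<alpha> (dir_deriv h \<psi>) x)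
      = (\<lambda>h. \<Sum>i\<in>Basis. (h \<bullet> i) *\<^sub>R I_op u \<alpha> (dir_deriv i \<psi>) x)"
    by (rule ext, rule I_op_dir_deriv_eq_sum[OF assms])
  have "bounded_linear (\<lambda>h. I_op u \<alpha> (dir_deriv h \<psi>) x)"
    unfolding eq
    by (intro bounded_linear_sum bounded_linear_compose[OF bounded_linear_scaleR_left] bounded_linear_inner_left)
  then show ?thesis
    using K by (rule has_derivative_at_of_quadratic_remainder)
qed

lemma dir_deriv_I_op:
  fixes \<psi> :: "'a::euclidean_space \<Rightarrow> complex"
  assumes "Re \<alpha> < 0" "bounded_twice_differentiable \<psi>"
  shows "dir_deriv v (I_op u \<alpha> \<psi>) = I_op u \<alpha> (dir_deriv v \<psi>)"
proof
  fix x
  have "dir_deriv v (I_op u \<alpha> \<psi>) x = frechet_derivative (I_op u \<alpha> \<psi>) (at x) v"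
    by (simp only: dir_deriv_def)
  also have "\<dots> = I_op u \<alpha> (dir_deriv v \<psi>) x"
    by (simp only: frechet_derivative_at[OF has_derivative_I_op[OF assms], symmetric])
  finally show "dir_deriv v (I_op u \<alpha> \<psi>) x = I_op u \<alpha> (dir_deriv v \<psi>) x" .
qed

section \<open>Inverting the operator\<close>

lemma I_op_left_inverse:
  fixes \<phi> :: "'a::euclidean_space \<Rightarrow> complex"
  assumes a: "Re \<alpha> < 0" and d: "\<And>y. \<phi> differentiable (at y)"
    and \<phi>_bc: "\<phi> \<in> bcontfun" and D_bc: "dir_deriv u \<phi> \<in> bcontfun"
  shows "I_op u \<alpha> (\<lambda>y. dir_deriv u \<phi> y - \<alpha> * \<phi> y) x = \<phi> x"
proof -
  define f where "f t = exp (\<alpha> * complex_of_real t) * (dir_deriv u \<phi> (x - t *\<^sub>R u) - \<alpha> * \<phi> (x - t *\<^sub>R u))"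
    for t :: real
  have cont_\<phi>: "continuous_on UNIV \<phi>" and cont_D: "continuous_on UNIV (dir_deriv u \<phi>)"
    using \<phi>_bc D_bc by (simp_all add: bcontfun_def)
  obtain B where B: "\<And>y. norm (\<phi> y) \<le> B"
    using \<phi>_bc by (auto simp: bcontfun_def bounded_iff)
  have f_cont: "continuous_on UNIV f"
    unfolding f_def
    by (intro continuous_intros continuous_on_compose2[OF cont_D] continuous_on_compose2[OF cont_\<phi>]) auto
  have "set_integrable lborel {0..} (\<lambda>t. exp (\<alpha> * complex_of_real t) * dir_deriv u \<phi> (x - t *\<^sub>R u)
      - \<alpha> * (exp (\<alpha> * complex_of_real t) * \<phi> (x - t *\<^sub>R u)))"
    using set_integrable_I_op_integrand_bcontfun[OF a D_bc, where x=x and u=u]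
      set_integrable_I_op_integrand_bcontfun[OF a \<phi>_bc, where x=x and u=u]
    by (intro set_integral_diff(1) set_integrable_mult_right)
  moreover have "f = (\<lambda>t. exp (\<alpha> * complex_of_real t) * dir_deriv u \<phi> (x - t *\<^sub>R u)
      - \<alpha> * (exp (\<alpha> * complex_of_real t) * \<phi> (x - t *\<^sub>R u)))"
    by (simp add: f_def fun_eq_iff algebra_simps)
  ultimately have f_int: "set_integrable lborel {0..} f" by simp
  have F: "((\<lambda>s. - (exp (\<alpha> * complex_of_real s) * \<phi> (x - s *\<^sub>R u))) has_vector_derivative f t) (at t)" for t
  proof -
    have "((\<lambda>s. exp (\<alpha> * complex_of_real s)) has_vector_derivative \<alpha> * exp (\<alpha> * complex_of_real t)) (at t)"
      by (rule has_vector_derivative_real_field) (auto intro!: derivative_eq_intros)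
    from has_vector_derivative_minus[OF has_vector_derivative_mult[OF this has_vector_derivative_along_line[OF d]]]
    show ?thesis by (simp add: f_def algebra_simps)
  qed
  have "((\<lambda>s. - (exp (\<alpha> * complex_of_real s) * \<phi> (x - s *\<^sub>R u))) \<longlongrightarrow> 0) at_top"
    using tendsto_minus[OF tendsto_exp_mult_bounded_at_top[OF a B]] by simp
  from set_integral_halfline_FTC[OF F f_cont f_int this]
  show ?thesis by (simp add: I_op_integral f_def)
qed

lemma I_op_right_inverse:
  fixes \<phi> :: "'a::euclidean_space \<Rightarrow> complex"
  assumes a: "Re \<alpha> < 0" and \<phi>: "bounded_twice_differentiable \<phi>"
  shows "dir_deriv u (I_op u \<alpha> \<phi>) x - \<alpha> * I_op u \<alpha> \<phi> x = \<phi> x"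
proof -
  have d: "\<And>y. \<phi> differentiable (at y)"
    using \<phi> by (simp add: bounded_twice_differentiable_def)
  note \<phi>_bc = bounded_twice_differentiable_bcontfun[OF \<phi>]
  have "dir_deriv u (I_op u \<alpha> \<phi>) x - \<alpha> * I_op u \<alpha> \<phi> x
      = 1 * I_op u \<alpha> (dir_deriv u \<phi>) x + (- \<alpha>) * I_op u \<alpha> \<phi> x"
    by (simp add: dir_deriv_I_op[OF a \<phi>])
  also have "\<dots> = I_op u \<alpha> (\<lambda>y. dir_deriv u \<phi> y - \<alpha> * \<phi> y) x"
    using I_op_lincomb[OF a \<phi>_bc(2) \<phi>_bc(1), where a=1 and b="- \<alpha>"] by simp
  also have "\<dots> = \<phi> x"
    by (rule I_op_left_inverse[OF a d \<phi>_bc(1) \<phi>_bc(2)])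
  finally show ?thesis .
qed

section \<open>Schwartz functions\<close>

lemma schwartz_seminorm_upper:
  assumes "\<phi> \<in> schwartz" "set vs \<subseteq> Basis"
  shows "(1 + norm x) ^ N * cmod (iter_deriv vs \<phi> x) \<le> schwartz_seminorm N vs \<phi>"
proof -
  have "bounded (range (\<lambda>x. (1 + norm x) ^ N * cmod (iter_deriv vs \<phi> x)))"
    using assms unfolding schwartz_def by blast
  then show ?thesis
    unfolding schwartz_seminorm_def by (intro cSUP_upper bounded_imp_bdd_above) auto
qed

lemma schwartz_seminorm_nonneg:
  assumes "\<phi> \<in> schwartz" "set vs \<subseteq> Basis"
  shows "0 \<le> schwartz_seminorm N vs \<phi>"
  using schwartz_seminorm_upper[OF assms, of 0 N] by (rule order_trans[rotated]) simp

lemma schwartz_iter_deriv_differentiable: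
  assumes "\<phi> \<in> schwartz" "set vs \<subseteq> Basis"
  shows "iter_deriv vs \<phi> differentiable (at x)"
  using assms unfolding schwartz_def by blast

lemma schwartz_iter_deriv_bcontfun:
  assumes "\<phi> \<in> schwartz" "set vs \<subseteq> Basis"
  shows "iter_deriv vs \<phi> \<in> bcontfun"
proof -
  have "bounded (range (\<lambda>x. (1 + norm x) ^ 0 * cmod (iter_deriv vs \<phi> x)))"
    using assms unfolding schwartz_def by blast
  then have "bounded (range (iter_deriv vs \<phi>))"
    by (simp add: bounded_norm_comp)
  moreover have "continuous_on UNIV (iter_deriv vs \<phi>)"
    by (rule continuous_on_UNIV_differentiable[OF schwartz_iter_deriv_differentiable[OF assms]])
  ultimately show ?thesis by (simp add: bcontfun_def)
qed

lemma bounded_twice_differentiable_schwartz: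
  assumes "\<phi> \<in> schwartz" "set vs \<subseteq> Basis"
  shows "bounded_twice_differentiable (iter_deriv vs \<phi>)"
proof -
  have "iter_deriv ws \<phi> differentiable (at x)" "bounded (range (iter_deriv ws \<phi>))"
    if "set ws \<subseteq> Basis" for ws x
    using schwartz_iter_deriv_differentiable[OF assms(1) that]
      schwartz_iter_deriv_bcontfun[OF assms(1) that] by (simp_all add: bcontfun_def)
  from this[of vs] this[of "_ # vs"] this[of "_ # _ # vs"] show ?thesis
    using assms(2) by (simp add: bounded_twice_differentiable_def)
qed

lemma iter_deriv_I_op:
  assumes "Re \<alpha> < 0" "\<phi> \<in> schwartz" "set vs \<subseteq> Basis"
  shows "iter_deriv vs (I_op u \<alpha> \<phi>) = I_op u \<alpha> (iter_deriv vs \<phi>)"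
  using assms(3)
proof (induction vs)
  case Nil
  then show ?case by simp
next
  case (Cons v vs)
  then have "iter_deriv (v # vs) (I_op u \<alpha> \<phi>) = dir_deriv v (I_op u \<alpha> (iter_deriv vs \<phi>))"
    by simp
  also have "\<dots> = I_op u \<alpha> (iter_deriv (v # vs) \<phi>)"
    using Cons.prems by (simp add: dir_deriv_I_op[OF assms(1) bounded_twice_differentiable_schwartz[OF assms(2)]])
  finally show ?case .
qed

lemma I_op_schwartz_weighted_bound:
  assumes "norm u = 1" "Re \<alpha> < 0" "\<phi> \<in> schwartz" "set vs \<subseteq> Basis"
  shows "(1 + norm x) ^ N * cmod (iter_deriv vs (I_op u \<alpha> \<phi>) x) \<le> schwartz_seminorm N vs \<phi> * exp_moment \<alpha> N"
  unfolding iter_deriv_I_op[OF assms(2-4)]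
  using schwartz_iter_deriv_bcontfun[OF assms(3,4)] schwartz_seminorm_upper[OF assms(3,4)]
  by (intro I_op_weighted_bound[OF assms(1,2)]) (auto simp: bcontfun_def)

lemma I_op_schwartz:
  assumes "norm u = 1" "Re \<alpha> < 0" "\<phi> \<in> schwartz"
  shows "I_op u \<alpha> \<phi> \<in> schwartz"
  unfolding schwartz_def
proof (intro CollectI allI impI conjI)
  fix vs :: "'a list" and N :: nat and x
  assume vs: "set vs \<subseteq> Basis"
  show "iter_deriv vs (I_op u \<alpha> \<phi>) differentiable (at x)"
    unfolding iter_deriv_I_op[OF assms(2,3) vs]
    using has_derivative_I_op[OF assms(2) bounded_twice_differentiable_schwartz[OF assms(3) vs]]
    by (rule differentiableI)
  show "bounded (range (\<lambda>x. (1 + norm x) ^ N * cmod (iter_deriv vs (I_op u \<alpha> \<phi>) x)))"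
    using I_op_schwartz_weighted_bound[OF assms vs]
    by (intro boundedI[where B="schwartz_seminorm N vs \<phi> * exp_moment \<alpha> N"]) auto
qed

lemma schwartz_seminorm_I_op_le:
  assumes "norm u = 1" "Re \<alpha> < 0" "\<phi> \<in> schwartz" "set vs \<subseteq> Basis"
  shows "schwartz_seminorm N vs (I_op u \<alpha> \<phi>) \<le> exp_moment \<alpha> N * schwartz_seminorm N vs \<phi>"
  unfolding schwartz_seminorm_def[of N vs "I_op u \<alpha> \<phi>"]
  using I_op_schwartz_weighted_bound[OF assms] by (intro cSUP_least) (auto simp: mult.commute)

lemma schwartz_continuous_I_op:
  assumes "norm u = 1" "Re \<alpha> < 0"
  shows "schwartz_continuous (I_op u \<alpha>)"
  unfolding schwartz_continuous_def
proof (intro allI impI exI ballI)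
  fix N :: nat and vs :: "'a list" and \<phi> :: "'a \<Rightarrow> complex"
  assume vs: "set vs \<subseteq> Basis" and \<phi>: "\<phi> \<in> schwartz"
  let ?S = "{..N} \<times> {ws. set ws \<subseteq> Basis \<and> length ws \<le> length vs}"
  have "finite ?S"
    by (intro finite_cartesian_product finite_lists_length_le) auto
  then have "schwartz_seminorm N vs \<phi> \<le> (\<Sum>(N', ws)\<in>?S. schwartz_seminorm N' ws \<phi>)"
    using member_le_sum[of "(N, vs)" ?S "\<lambda>(N', ws). schwartz_seminorm N' ws \<phi>"]
      schwartz_seminorm_nonneg[OF \<phi>] vs by auto
  then show "schwartz_seminorm N vs (I_op u \<alpha> \<phi>) \<le> exp_moment \<alpha> N * (\<Sum>(N', ws)\<in>?S. schwartz_seminorm N' ws \<phi>)"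
    using schwartz_seminorm_I_op_le[OF assms \<phi> vs, of N] exp_moment_nonneg[of \<alpha> N]
    by (meson mult_left_mono order_trans)
qed

theorem proposition4p4:
  fixes u :: "'a::euclidean_space" and \<alpha> :: complex
  assumes "norm u = 1" and "Re \<alpha> < 0"
  shows "(\<forall>\<phi>\<in>schwartz. I_op u \<alpha> \<phi> \<in> schwartz)
    \<and> (\<forall>\<phi>\<in>schwartz. \<forall>\<psi>\<in>schwartz. \<forall>a b::complex.
          I_op u \<alpha> (\<lambda>x. a * \<phi> x + b * \<psi> x) = (\<lambda>x. a * I_op u \<alpha> \<phi> x + b * I_op u \<alpha> \<psi> x))
    \<and> (\<forall>\<phi>\<in>schwartz. \<forall>x0. I_op u \<alpha> (\<lambda>x. \<phi> (x - x0)) = (\<lambda>x. I_op u \<alpha> \<phi> (x - x0)))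
    \<and> schwartz_continuous (I_op u \<alpha>)
    \<and> (\<forall>\<phi>\<in>schwartz.
          I_op u \<alpha> (\<lambda>x. dir_deriv u \<phi> x - \<alpha> * \<phi> x) = \<phi>
        \<and> (\<lambda>x. dir_deriv u (I_op u \<alpha> \<phi>) x - \<alpha> * I_op u \<alpha> \<phi> x) = \<phi>)"
proof (intro conjI ballI allI ext)
  note u = assms(1) and a = assms(2)
  have bc: "\<phi> \<in> bcontfun" and btd: "bounded_twice_differentiable \<phi>" if "\<phi> \<in> schwartz" for \<phi>
    using schwartz_iter_deriv_bcontfun[OF that, of "[]"] bounded_twice_differentiable_schwartz[OF that, of "[]"]
    by simp_all
  show "I_op u \<alpha> \<phi> \<in> schwartz" if "\<phi> \<in> schwartz" for \<phi>
    by (rule I_op_schwartz[OF u a that])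
  show "I_op u \<alpha> (\<lambda>x. c * \<phi> x + d * \<psi> x) x = c * I_op u \<alpha> \<phi> x + d * I_op u \<alpha> \<psi> x"
    if "\<phi> \<in> schwartz" "\<psi> \<in> schwartz" for \<phi> \<psi> c d x
    by (rule I_op_lincomb[OF a bc[OF that(1)] bc[OF that(2)]])
  show "I_op u \<alpha> (\<lambda>x. \<phi> (x - x0)) x = I_op u \<alpha> \<phi> (x - x0)" for \<phi> x0 x
    by (rule I_op_translate)
  show "schwartz_continuous (I_op u \<alpha>)"
    by (rule schwartz_continuous_I_op[OF u a])
  show "I_op u \<alpha> (\<lambda>x. dir_deriv u \<phi> x - \<alpha> * \<phi> x) x = \<phi> x" if "\<phi> \<in> schwartz" for \<phi> x
    using btd[OF that] bounded_twice_differentiable_bcontfun[OF btd[OF that]]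
    by (intro I_op_left_inverse[OF a]) (auto simp: bounded_twice_differentiable_def)
  show "dir_deriv u (I_op u \<alpha> \<phi>) x - \<alpha> * I_op u \<alpha> \<phi> x = \<phi> x" if "\<phi> \<in> schwartz" for \<phi> x
    by (rule I_op_right_inverse[OF a btd[OF that]])
qed

end
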